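(* Let $A^{(n)}_k$ be Knuth's Faulhaber coefficients, defined by $$\sum_{n\ge1}\sum_{k=0}^{n-1}\frac{x^{2n}}{(2n)!}A^{(n)}_k y^{k}=\left(\frac{x\sqrt y}{2}\right)\frac{\cosh\!\left(\tfrac12 x\sqrt{y+4}\right)-\cosh\!\left(\tfrac12 x\sqrt y\right)}{\sinh\!\left(\tfrac12 x\sqrt y\right)},$$ and for $n\ge k\ge2$ let $b(n,k)=(-1)^{n-k}A^{(n)}_{n-k}\frac{(k!)^2}{(2k+1)!}$. Then for all $n>2$ and $2\le k\le n-1$, $$b(n,k)>2\,b(n,k+1)\quad\text{and}\quad b(n,k)>\sum_{l=k+1}^{n}b(n,l),$$ and $b(n,k)>0$ for all $n\ge k\ge2$. *)

theory Defs
  imports "HOL-Computational_Algebra.Formal_Power_Series"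
begin

(* Bivariate formal power series: outer variable x, inner variable y (type real fps fps). *)

(* cosh(x * sqrt(q) / 2) = sum_m (q/4)^m x^(2m) / (2m)! *)
definition cosh_half :: "real fps \<Rightarrow> real fps fps" where
  "cosh_half q = Abs_fps (\<lambda>n. if even n
      then fps_const (1 / fact n) * (fps_const (1/4) * q) ^ (n div 2) else 0)"

(* sinh(z)/z at z = x * sqrt(q) / 2, i.e. sum_m (q/4)^m x^(2m) / (2m+1)! *)
definition sinhc_half :: "real fps \<Rightarrow> real fps fps" where
  "sinhc_half q = Abs_fps (\<lambda>n. if even n
      then fps_const (1 / fact (n + 1)) * (fps_const (1/4) * q) ^ (n div 2) else 0)"

(* Right-hand side of Knuth's generating function:
   (x sqrt y / 2) (cosh(x sqrt(y+4)/2) - cosh(x sqrt y / 2)) / sinh(x sqrt y / 2) *)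
definition knuth_gf :: "real fps fps" where
  "knuth_gf = inverse (sinhc_half fps_X)
      * (cosh_half (fps_X + 4) - cosh_half fps_X)"

definition knuthA :: "nat \<Rightarrow> nat \<Rightarrow> real" where
  "knuthA n k = fact (2 * n) * fps_nth (fps_nth knuth_gf (2 * n)) k"

definition bnk :: "nat \<Rightarrow> nat \<Rightarrow> real" where
  "bnk n k = (-1) ^ (n - k) * knuthA n (n - k) * (fact k)^2 / fact (2 * k + 1)"

end

theory Submission
  imports Defs
begin

(* Write t = y/4 and let c_m be the coefficients of sqrt t / sinh sqrt t.  Since the generating
   function is a product of two series in x^2, extracting the coefficient of x^(2n) y^(n-k) gives
     A^(n)_(n-k) = (2n)! 4^(k-n) P(n,k),   P(n,k) = sum_i binom(i,k) c_(n-i) / (2i)!.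
   Shifting i by one and using (k+1) binom(i+1,k+1) = (i+1) binom(i,k) expresses P(n,k) through
   P(n+1,k+1) and P(n+1,k+2); for b this becomes the three-term recurrence
     (2k+1) b(n+1,k+1) = (2k+5) b(n+1,k+2) + (n+1)(2n+1) / (2(2k+3)) b(n,k),
   where b is extended by b(n,n+1) = 0, and b(n,1) = 0 for n >= 2 because sum_j c_(p-j)/(2j+1)! = 0
   for p > 0.  An induction on n, and downwards in k within each row, then shows that b(n,k) > 0 and
   b(n,k) > 2 b(n,k+1); the bound on the tail sums follows by summing this halving property. *)

unbundle fps_syntax

definition even_fps :: "(nat \<Rightarrow> 'a::zero) \<Rightarrow> 'a fps" where
  "even_fps F = Abs_fps (\<lambda>n. if even n then F (n div 2) else 0)"

lemma even_fps_nth_double [simp]: "even_fps F $ (2 * n) = F n"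
  by (simp add: even_fps_def)

lemma even_fps_mult:
  fixes F G :: "nat \<Rightarrow> 'a::semiring_0"
  shows "even_fps F * even_fps G = even_fps (\<lambda>p. \<Sum>j=0..p. F j * G (p - j))"
proof (rule fps_ext)
  fix n
  let ?h = "\<lambda>i. even_fps F $ i * even_fps G $ (n - i)"
  show "(even_fps F * even_fps G) $ n = even_fps (\<lambda>p. \<Sum>j=0..p. F j * G (p - j)) $ n"
  proof (cases "even n")
    case True
    then obtain p where n: "n = 2 * p" by (elim evenE)
    have "(even_fps F * even_fps G) $ n = (\<Sum>i\<in>(\<lambda>j. 2 * j) ` {0..p}. ?h i)"
      unfolding fps_mult_nth n
      by (rule sum.mono_neutral_right) (auto simp: even_fps_def elim!: evenE)
    also have "\<dots> = (\<Sum>j=0..p. F j * G (p - j))"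
      by (subst sum.reindex) (auto simp: inj_on_def n simp flip: diff_mult_distrib2)
    finally show ?thesis by (simp add: n)
  next
    case False
    then show ?thesis
      by (auto simp: fps_mult_nth even_fps_def intro!: sum.neutral)
  qed
qed

lemma fps_const_sum: "fps_const (\<Sum>k\<in>A. f k) = (\<Sum>k\<in>A. fps_const (f k))"
  by (rule fps_ext) (simp add: fps_sum_nth)

lemma fps_nth_scaled_X_plus_1_power:
  fixes a :: "'a::comm_semiring_1"
  shows "((fps_const a * fps_X + 1) ^ m) $ i = of_nat (m choose i) * a ^ i"
proof -
  have "((fps_const a * fps_X + 1) ^ m) $ i
      = (\<Sum>k\<le>m. of_nat (m choose k) * (a ^ k * (if i = k then 1 else 0)))"
    by (simp add: binomial_ring fps_sum_nth power_mult_distrib)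
  also have "\<dots> = (\<Sum>k\<le>m. if k = i then of_nat (m choose k) * a ^ k else 0)"
    by (rule sum.cong) auto
  also have "\<dots> = of_nat (m choose i) * a ^ i"
    by (simp add: binomial_eq_0)
  finally show ?thesis .
qed

lemma fps_nth_scaled_X_power_mult_binomial:
  fixes a :: "'a::comm_semiring_1"
  shows "((fps_const a * fps_X) ^ j * (fps_const a * fps_X + 1) ^ m) $ q
    = (if j \<le> q then of_nat (m choose (q - j)) * a ^ q else 0)"
proof -
  have "(fps_const a * fps_X) ^ j * (fps_const a * fps_X + 1) ^ m
      = fps_X ^ j * (fps_const (a ^ j) * (fps_const a * fps_X + 1) ^ m)"
    by (simp add: power_mult_distrib mult_ac)
  moreover have "a ^ j * (of_nat (m choose (q - j)) * a ^ (q - j))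
      = of_nat (m choose (q - j)) * a ^ q" if "j \<le> q"
    using that by (metis le_add_diff_inverse mult.left_commute power_add)
  ultimately show ?thesis
    by (simp add: fps_X_power_mult_nth fps_nth_scaled_X_plus_1_power)
qed

lemma binomial_three_term:
  "4 * (real k + 1) * (real k + 2) * real (Suc i choose (k + 2))
     + (real k + 1) * (4 * real k + 2) * real (Suc i choose Suc k)
   = 2 * (2 * real i + 1) * (real i + 1) * real (i choose k)"
proof -
  have "real (k + 1) * real (Suc i choose Suc k) = real (i + 1) * real (i choose k)"
    by (metis Suc_eq_plus1 Suc_times_binomial of_nat_mult)
  moreover have "real (k + 2) * real (Suc i choose (k + 2)) = real (i + 1) * real (i choose Suc k)"
    by (metis Suc_eq_plus1 Suc_times_binomial add_2_eq_Suc' of_nat_mult)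
  moreover have "real (Suc i choose Suc k) = real (i choose k) + real (i choose Suc k)"
    by simp
  ultimately show ?thesis
    by (simp only: of_nat_add of_nat_1 of_nat_numeral) algebra
qed

lemma three_term_dominance:
  fixes x K B0 B1 B2 R0 R1 :: real
  assumes "0 \<le> x" "0 < K"
    and rec0: "(2 * x + 1) * B0 = (2 * x + 5) * B1 + K / (2 * (2 * x + 3)) * R0"
    and rec1: "(2 * x + 3) * B1 = (2 * x + 7) * B2 + K / (2 * (2 * x + 5)) * R1"
    and B: "0 < B1" "2 * B2 < B1" and R: "0 < R0" "2 * R1 < R0"
  shows "0 < B0 \<and> 2 * B1 < B0"
proof -
  define C0 C1 where "C0 = K / (2 * (2 * x + 3))" and "C1 = K / (2 * (2 * x + 5))"
  have C: "0 < C1" "C1 < C0"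
    using assms(1,2) by (simp_all add: C0_def C1_def frac_less2)
  have "(2 * x + 7) * B2 < (2 * x + 7) * (B1 / 2)" "C1 * R1 < C1 * (R0 / 2)"
    using assms(1) B R C by (simp_all add: mult_strict_left_mono)
  then have "(2 * x - 1) * B1 < C1 * R0"
    using rec1 unfolding C1_def[symmetric] by (simp add: algebra_simps)
  also have "\<dots> < C0 * R0"
    using C R by (simp add: mult_strict_right_mono)
  finally have "(2 * x + 1) * (2 * B1) < (2 * x + 1) * B0"
    using rec0 B unfolding C0_def[symmetric] by (simp add: algebra_simps)
  then have "2 * B1 < B0"
    using assms(1) by (simp add: mult_less_cancel_left_pos)
  with B show ?thesis by simp
qed

lemma sum_less_of_halving:
  fixes f :: "nat \<Rightarrow> 'a::linordered_idom"
  assumes "k \<le> n" "0 < f n"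
    and halving: "\<And>l. k \<le> l \<Longrightarrow> l < n \<Longrightarrow> 2 * f (Suc l) < f l"
  shows "(\<Sum>l = Suc k..n. f l) < f k"
  using assms(1)
proof (induction k rule: inc_induct)
  case base
  with assms(2) show ?case by simp
next
  case (step l)
  have "(\<Sum>l = Suc l..n. f l) = f (Suc l) + (\<Sum>l = Suc (Suc l)..n. f l)"
    using step.hyps(2) by (simp add: sum.atLeast_Suc_atMost)
  also have "\<dots> < 2 * f (Suc l)"
    using step.IH by simp
  also have "\<dots> < f l"
    using halving step.hyps by simp
  finally show ?case .
qed

(* sinh sqrt t / sqrt t *)
definition sinhc_series :: "real fps" where
  "sinhc_series = Abs_fps (\<lambda>m. 1 / fact (2 * m + 1))"

definition inv_sinhc_coeff :: "nat \<Rightarrow> real" where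
  "inv_sinhc_coeff = fps_nth (inverse sinhc_series)"

lemma inv_sinhc_coeff_conv:
  "(\<Sum>j=0..p. inv_sinhc_coeff (p - j) / fact (2 * j + 1)) = (if p = 0 then 1 else 0)"
proof -
  have "sinhc_series * inverse sinhc_series = 1"
    by (rule inverse_mult_eq_1') (simp add: sinhc_series_def)
  then have "(sinhc_series * inverse sinhc_series) $ p = (1 :: real fps) $ p" by simp
  then show ?thesis by (simp add: fps_mult_nth inv_sinhc_coeff_def sinhc_series_def)
qed

lemma inv_sinhc_coeff_0 [simp]: "inv_sinhc_coeff 0 = 1"
  using inv_sinhc_coeff_conv[of 0] by simp

abbreviation quarter_X :: "real fps" where
  "quarter_X \<equiv> fps_const (1/4) * fps_X"

lemma sinhc_half_X_eq_even_fps: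
  "sinhc_half fps_X = even_fps (\<lambda>m. fps_const (1 / fact (2 * m + 1)) * quarter_X ^ m)"
  by (rule fps_ext) (auto simp: sinhc_half_def even_fps_def elim!: evenE)

lemma inverse_sinhc_half_X:
  "inverse (sinhc_half fps_X) = even_fps (\<lambda>m. fps_const (inv_sinhc_coeff m) * quarter_X ^ m)"
  (is "_ = ?T")
proof -
  have collect_powers: "fps_const a * quarter_X ^ j * (fps_const b * quarter_X ^ (p - j))
      = fps_const (b * a) * quarter_X ^ p" if "j \<le> p" for a b :: real and j p :: nat
  proof -
    have "quarter_X ^ j * quarter_X ^ (p - j) = quarter_X ^ p"
      using that by (simp flip: power_add)
    then show ?thesis by (simp add: mult_ac flip: fps_const_mult)
  qed
  have "sinhc_half fps_X * ?T = even_fps (\<lambda>p.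
      fps_const (\<Sum>j=0..p. inv_sinhc_coeff (p - j) / fact (2 * j + 1)) * quarter_X ^ p)"
    unfolding sinhc_half_X_eq_even_fps even_fps_mult fps_const_sum sum_distrib_right
    by (intro arg_cong[where f = even_fps] ext sum.cong refl) (simp add: collect_powers)
  also have "\<dots> = 1"
    unfolding inv_sinhc_coeff_conv by (rule fps_ext) (auto simp: even_fps_def elim!: evenE)
  finally have "sinhc_half fps_X * ?T = 1" .
  moreover have "sinhc_half fps_X $ 0 = 1" "?T $ 0 = 1"
    by (simp_all add: sinhc_half_def even_fps_def)
  ultimately show ?thesis
    using fps_lr_inverse_unique_ring1(2)[of "sinhc_half fps_X" ?T]
    by (simp add: fps_inverse_def[of "sinhc_half fps_X"])
qed

lemma cosh_half_diff_eq:
  "cosh_half (fps_X + 4) - cosh_half fps_X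
     = even_fps (\<lambda>m. fps_const (1 / fact (2 * m)) * ((quarter_X + 1) ^ m - quarter_X ^ m))"
proof -
  have "fps_const (1/4) * (fps_X + 4) = quarter_X + (1 :: real fps)"
    by (simp add: distrib_left fps_numeral_fps_const)
  then show ?thesis
    by (intro fps_ext) (auto simp: cosh_half_def even_fps_def algebra_simps elim!: evenE)
qed

lemma knuth_gf_nth_double:
  "knuth_gf $ (2 * n) = (\<Sum>j=0..n. fps_const (inv_sinhc_coeff j / fact (2 * (n - j)))
      * (quarter_X ^ j * (quarter_X + 1) ^ (n - j) - quarter_X ^ n))"
proof -
  have "fps_const c * Q ^ j * (fps_const d * ((Q + 1) ^ (n - j) - Q ^ (n - j)))
      = fps_const (c * d) * (Q ^ j * (Q + 1) ^ (n - j) - Q ^ n)"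
    if "j \<le> n" for c d :: real and Q :: "real fps" and j
  proof -
    have "Q ^ j * Q ^ (n - j) = Q ^ n"
      using that by (simp flip: power_add)
    then show ?thesis by (simp add: algebra_simps flip: fps_const_mult)
  qed
  then show ?thesis
    unfolding knuth_gf_def inverse_sinhc_half_X cosh_half_diff_eq even_fps_mult even_fps_nth_double
    by (intro sum.cong) auto
qed

definition knuthP :: "nat \<Rightarrow> nat \<Rightarrow> real" where
  "knuthP n k = (\<Sum>i=0..n. real (i choose k) * inv_sinhc_coeff (n - i) / fact (2 * i))"

lemma knuth_gf_coeff:
  assumes "1 \<le> k" "k \<le> n"
  shows "knuth_gf $ (2 * n) $ (n - k) = (1/4) ^ (n - k) * knuthP n k"
proof -
  have summand: "(fps_const (inv_sinhc_coeff j / fact (2 * (n - j)))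
         * (quarter_X ^ j * (quarter_X + 1) ^ (n - j) - quarter_X ^ n)) $ (n - k)
      = (1/4) ^ (n - k) * (real ((n - j) choose k) * inv_sinhc_coeff j / fact (2 * (n - j)))"
    for j
  proof -
    have "quarter_X ^ n $ (n - k) = 0"
      using assms by (simp add: power_mult_distrib)
    moreover have "(n - j) choose (n - k - j) = (n - j) choose k" if "j \<le> n - k"
      using that assms binomial_symmetric[of k "n - j"] by (simp add: diff_diff_eq add.commute)
    moreover have "(n - j) choose k = 0" if "\<not> j \<le> n - k"
      using that assms by (simp add: binomial_eq_0)
    ultimately show ?thesis
      by (auto simp: fps_nth_scaled_X_power_mult_binomial)
  qed
  then have "knuth_gf $ (2 * n) $ (n - k)
      = (1/4) ^ (n - k) * (\<Sum>j=0..n. real ((n - j) choose k) * inv_sinhc_coeff j / fact (2 * (n - j)))"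
    unfolding knuth_gf_nth_double fps_sum_nth sum_distrib_left
    by (intro sum.cong) (simp_all add: summand)
  also have "(\<Sum>j=0..n. real ((n - j) choose k) * inv_sinhc_coeff j / fact (2 * (n - j))) = knuthP n k"
    unfolding knuthP_def by (subst sum.atLeastAtMost_rev) simp
  finally show ?thesis .
qed

lemma knuthP_rec:
  "knuthP m k = 4 * (real k + 1) * (real k + 2) * knuthP (Suc m) (k + 2)
     + (real k + 1) * (4 * real k + 2) * knuthP (Suc m) (Suc k)"
proof -
  define g where "g i = 4 * (real k + 1) * (real k + 2) * real (i choose (k + 2))
     + (real k + 1) * (4 * real k + 2) * real (i choose Suc k)" for i
  have "4 * (real k + 1) * (real k + 2) * knuthP (Suc m) (k + 2)
          + (real k + 1) * (4 * real k + 2) * knuthP (Suc m) (Suc k)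
      = (\<Sum>i=0..Suc m. g i * inv_sinhc_coeff (Suc m - i) / fact (2 * i))"
    unfolding knuthP_def sum_distrib_left sum.distrib[symmetric]
    by (intro sum.cong) (simp_all add: g_def field_simps)
  also have "\<dots> = (\<Sum>i=0..m. g (Suc i) * inv_sinhc_coeff (m - i) / fact (2 * Suc i))"
    by (simp only: sum.atLeast0_atMost_Suc_shift diff_Suc_Suc) (simp add: g_def)
  also have "\<dots> = knuthP m k"
    unfolding knuthP_def
  proof (intro sum.cong refl)
    fix i
    have fact_double_Suc:
      "fact (2 * Suc i) = (2 * (2 * real i + 1) * (real i + 1)) * (fact (2 * i) :: real)"
      by (simp add: algebra_simps)
    show "g (Suc i) * inv_sinhc_coeff (m - i) / fact (2 * Suc i)
        = real (i choose k) * inv_sinhc_coeff (m - i) / fact (2 * i)"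
      unfolding g_def binomial_three_term fact_double_Suc
      by (subst nonzero_mult_divide_mult_cancel_left[symmetric, of "2 * (2 * real i + 1) * (real i + 1)"])
        (simp_all add: mult_ac)
  qed
  finally show ?thesis by simp
qed

lemma knuthP_diag: "knuthP n n = 1 / fact (2 * n)"
proof -
  have "knuthP n n = (\<Sum>i=0..n. if i = n then 1 / fact (2 * n) else 0)"
    unfolding knuthP_def by (intro sum.cong) (auto simp: binomial_eq_0)
  then show ?thesis by simp
qed

lemma knuthP_above: "knuthP n (Suc n) = 0"
  unfolding knuthP_def by (intro sum.neutral) (auto simp: binomial_eq_0)

lemma knuthP_Suc_1: "knuthP (Suc p) 1 = (if p = 0 then 1 / 2 else 0)"
proof -
  have "knuthP (Suc p) 1 = (\<Sum>i=0..p. real (Suc i) * inv_sinhc_coeff (p - i) / fact (2 * Suc i))"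
    unfolding knuthP_def by (simp only: sum.atLeast0_atMost_Suc_shift diff_Suc_Suc) simp
  also have "\<dots> = (\<Sum>i=0..p. inv_sinhc_coeff (p - i) / fact (2 * i + 1)) / 2"
    unfolding sum_divide_distrib
  proof (intro sum.cong refl)
    fix i
    have "fact (2 * Suc i) = 2 * real (Suc i) * (fact (2 * i + 1) :: real)"
      by (simp add: algebra_simps)
    then show "real (Suc i) * inv_sinhc_coeff (p - i) / fact (2 * Suc i)
        = inv_sinhc_coeff (p - i) / fact (2 * i + 1) / 2"
      by (simp del: of_nat_Suc)
  qed
  also have "\<dots> = (if p = 0 then 1 / 2 else 0)"
    unfolding inv_sinhc_coeff_conv by simp
  finally show ?thesis .
qed

definition beta_coeff :: "nat \<Rightarrow> real" where
  "beta_coeff k = (fact k)\<^sup>2 / fact (2 * k + 1)"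

lemma beta_coeff_Suc: "2 * (2 * real k + 3) * beta_coeff (Suc k) = (real k + 1) * beta_coeff k"
proof -
  define x f g where "x = real k" and "f = (fact k :: real)" and "g = (fact (2 * k + 1) :: real)"
  have "(fact (Suc k))\<^sup>2 = (x + 1)\<^sup>2 * f\<^sup>2"
    by (simp add: x_def f_def power2_eq_square algebra_simps)
  moreover have "fact (2 * Suc k + 1) = 2 * (2 * x + 3) * (x + 1) * g"
    by (simp add: x_def g_def algebra_simps)
  moreover have "x \<ge> 0" "g \<noteq> 0"
    by (simp_all add: x_def g_def)
  ultimately show ?thesis
    unfolding beta_coeff_def x_def[symmetric] f_def[symmetric] g_def[symmetric]
    by (simp add: power2_eq_square)
qed

(* Agrees with bnk for 1 <= k <= n (bnk_eq_b_closed), but vanishes at k = n + 1, where bnk does not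
   (there n - k truncates to 0); this makes b_closed_rec valid up to the diagonal. *)
definition b_closed :: "nat \<Rightarrow> nat \<Rightarrow> real" where
  "b_closed n k = (-1) ^ (n + k) * fact (2 * n) * (4 ^ k / 4 ^ n) * knuthP n k * beta_coeff k"

lemma bnk_eq_b_closed:
  assumes "1 \<le> k" "k \<le> n"
  shows "bnk n k = b_closed n k"
proof -
  have "(-1 :: real) ^ (n - k) = (-1) ^ (n + k)"
    using assms by (metis le_add_diff_inverse2 minus_one_power_iff even_add even_diff_nat)
  moreover have "(1/4 :: real) ^ (n - k) = 4 ^ k / 4 ^ n"
    using assms by (simp add: power_diff power_one_over)
  ultimately show ?thesis
    using knuth_gf_coeff[OF assms]
    by (simp add: bnk_def knuthA_def b_closed_def beta_coeff_def)
qed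

lemma b_closed_rec:
  "(2 * real i + 1) * b_closed (Suc m) (Suc i)
     = (2 * real i + 5) * b_closed (Suc m) (Suc (Suc i))
       + real (Suc m) * (2 * real (Suc m) - 1) / (2 * (2 * real i + 3)) * b_closed m i"
proof -
  define x s G p \<beta> where "x = real i" and "s = ((-1) ^ (m + i) :: real)"
    and "G = (fact (2 * m) :: real)" and "p = (4 ^ i / 4 ^ m :: real)" and "\<beta> = beta_coeff i"
  define K where "K = real (Suc m) * (2 * real (Suc m) - 1)"
  have fact_double_Suc: "fact (2 * Suc m) = 2 * K * G"
    by (simp add: K_def G_def algebra_simps)
  have signs: "(-1) ^ (Suc m + Suc i) = s" "(-1) ^ (Suc m + Suc (Suc i)) = - s"
    by (simp_all add: s_def)
  have powers: "4 ^ Suc i / 4 ^ Suc m = p" "4 ^ Suc (Suc i) / 4 ^ Suc m = 4 * p"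
    by (simp_all add: p_def)
  have nz: "2 * x + 3 \<noteq> 0" "2 * x + 5 \<noteq> 0"
    unfolding x_def by linarith+
  have beta1: "beta_coeff (Suc i) = \<beta> * (x + 1) / (2 * (2 * x + 3))"
    using beta_coeff_Suc[of i] nz by (simp add: x_def \<beta>_def field_simps)
  have beta2:
    "beta_coeff (Suc (Suc i)) = \<beta> * (x + 1) / (2 * (2 * x + 3)) * (x + 2) / (2 * (2 * x + 5))"
    using beta_coeff_Suc[of "Suc i"] nz unfolding beta1[symmetric] by (simp add: x_def field_simps)
  have b0: "b_closed m i = s * G * p * knuthP m i * \<beta>"
    by (simp add: b_closed_def s_def G_def p_def \<beta>_def)
  have b1: "b_closed (Suc m) (Suc i)
      = s * (2 * K * G) * p * knuthP (Suc m) (Suc i) * (\<beta> * (x + 1) / (2 * (2 * x + 3)))"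
    unfolding b_closed_def signs powers fact_double_Suc beta1 ..
  have b2: "b_closed (Suc m) (Suc (Suc i))
      = - s * (2 * K * G) * (4 * p) * knuthP (Suc m) (Suc (Suc i))
          * (\<beta> * (x + 1) / (2 * (2 * x + 3)) * (x + 2) / (2 * (2 * x + 5)))"
    unfolding b_closed_def signs powers fact_double_Suc beta2 ..
  show ?thesis
    using nz unfolding b0 b1 b2 knuthP_rec[of m i] x_def[symmetric] K_def[symmetric]
    by (simp add: divide_simps) (simp add: algebra_simps)
qed

lemma b_closed_diag_pos: "0 < b_closed n n"
  by (simp add: b_closed_def knuthP_diag beta_coeff_def flip: mult_2)

lemma b_closed_above: "b_closed n (Suc n) = 0"
  by (simp add: b_closed_def knuthP_above)

lemma b_closed_1:
  assumes "2 \<le> n"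
  shows "b_closed n 1 = 0"
proof -
  obtain p where "n = Suc p" "p \<noteq> 0"
    using assms by (cases n) auto
  then show ?thesis
    using knuthP_Suc_1[of p] by (simp add: b_closed_def)
qed

definition b_dominant :: "nat \<Rightarrow> nat \<Rightarrow> bool" where
  "b_dominant n k \<longleftrightarrow> 0 < b_closed n k \<and> 2 * b_closed n (Suc k) < b_closed n k"

lemma b_dominant_diag: "b_dominant n n"
  by (simp add: b_dominant_def b_closed_diag_pos b_closed_above)

lemma b_dominant_2:
  assumes "2 \<le> m" "0 < b_closed (Suc m) 3"
  shows "b_dominant (Suc m) 2"
proof -
  have "3 * b_closed (Suc m) 2 = 7 * b_closed (Suc m) 3"
    using b_closed_rec[of 1 m] b_closed_1[OF assms(1)] by (simp add: numeral_eq_Suc)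
  with assms(2) show ?thesis
    by (simp add: b_dominant_def numeral_eq_Suc)
qed

lemma b_dominant_rec:
  assumes "b_dominant m i" "b_dominant (Suc m) (Suc (Suc i))"
  shows "b_dominant (Suc m) (Suc i)"
proof -
  define K where "K = real (Suc m) * (2 * real (Suc m) - 1)"
  have "0 < K"
    unfolding K_def by simp
  moreover have "(2 * real i + 3) * b_closed (Suc m) (Suc (Suc i))
      = (2 * real i + 7) * b_closed (Suc m) (Suc (Suc (Suc i)))
        + K / (2 * (2 * real i + 5)) * b_closed m (Suc i)"
    using b_closed_rec[of "Suc i" m] unfolding K_def by (simp add: algebra_simps)
  ultimately show ?thesis
    using three_term_dominance[of "real i" K, OF _ _ b_closed_rec[of i m, folded K_def]] assms
    by (simp add: b_dominant_def)
qed

lemma b_dominant_row_Suc: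
  assumes m: "2 \<le> m"
    and row: "\<And>j. 2 \<le> j \<Longrightarrow> j \<le> m \<Longrightarrow> b_dominant m j"
    and j: "2 \<le> j" "j \<le> Suc m"
  shows "b_dominant (Suc m) j"
  using j(2,1)
proof (induction j rule: inc_induct)
  case base
  show ?case by (rule b_dominant_diag)
next
  case (step l)
  show ?case
  proof (cases "l = 2")
    case True
    with step.IH show ?thesis
      using b_dominant_2[OF m] by (simp add: b_dominant_def numeral_eq_Suc)
  next
    case False
    then obtain i where "l = Suc i" "2 \<le> i"
      using step.prems by (cases l) auto
    with step show ?thesis
      using b_dominant_rec row by simp
  qed
qed

lemma b_dominant_all:
  assumes "2 \<le> k" "k \<le> n"
  shows "b_dominant n k"
proof -
  have "2 \<le> n" using assms by simp
  then show ?thesis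
    using assms
  proof (induction n arbitrary: k rule: nat_induct_at_least)
    case base
    then show ?case by (simp add: b_dominant_diag)
  next
    case (Suc n)
    then show ?case by (intro b_dominant_row_Suc) auto
  qed
qed

theorem mainTheorem7:
  shows "(\<forall>n k. 2 < n \<and> 2 \<le> k \<and> k \<le> n - 1 \<longrightarrow>
            bnk n k > 2 * bnk n (k + 1) \<and> bnk n k > (\<Sum>l = k + 1..n. bnk n l))
       \<and> (\<forall>n k. 2 \<le> k \<and> k \<le> n \<longrightarrow> bnk n k > 0)"
proof (intro conjI allI impI)
  fix n k :: nat
  assume "2 < n \<and> 2 \<le> k \<and> k \<le> n - 1"
  then have k: "2 \<le> k" "Suc k \<le> n" by auto
  have bnk: "bnk n l = b_closed n l" if "k \<le> l" "l \<le> n" for l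
    using that k by (intro bnk_eq_b_closed) auto
  have dominant: "b_dominant n l" if "k \<le> l" "l \<le> n" for l
    using that k by (intro b_dominant_all) auto
  show "2 * bnk n (k + 1) < bnk n k"
    using dominant[of k] k by (simp add: b_dominant_def bnk)
  have "(\<Sum>l = k + 1..n. bnk n l) = (\<Sum>l = Suc k..n. b_closed n l)"
    by (intro sum.cong) (simp_all add: bnk)
  also have "\<dots> < b_closed n k"
    using k dominant by (intro sum_less_of_halving) (auto simp: b_dominant_def)
  finally show "(\<Sum>l = k + 1..n. bnk n l) < bnk n k"
    using k by (simp add: bnk)
next
  fix n k :: nat
  assume "2 \<le> k \<and> k \<le> n"
  then show "0 < bnk n k"
    using b_dominant_all[of k n] bnk_eq_b_closed[of k n] by (simp add: b_dominant_def)
qed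

end
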